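(* Let $\Lambda$ be a finitely aligned left cancellative small category and $v\in\Lambda^0$. (1) For $C\in v\Lambda^*$ let $H(C)=\{\alpha\in v\Lambda:\alpha\Lambda\in C\}$. Then $C\mapsto H(C)$ is a bijection from $v\Lambda^*$ onto the set of directed hereditary subsets of $v\Lambda$, with inverse $H\mapsto\{E\in\mathcal D^{(0)}_v: E\supseteq\alpha\Lambda\text{ for some }\alpha\in H\}$; moreover $C_1\subseteq C_2$ iff $H(C_1)\subseteq H(C_2)$. (2) For $C\in v\Lambda^*$, the ultrafilter $\mathcal U_C$ in $\mathcal A_v$ corresponding to $C$ equals $\{A\in\mathcal A_v: A\supseteq H(C)\cap\alpha\Lambda\text{ for some }\alpha\in H(C)\}$.
   Context: A left cancellative small category (LCSC) is a small category $\Lambda$ such that $\alpha\beta=\alpha\gamma$ implies $\beta=\gamma$. Morphisms are composed as $\alpha\beta$ when $s(\alpha)=r(\beta)$; $\Lambda^0$ is the set of objects (identity morphisms); $v\Lambda=\{\alpha:r(\alpha)=v\}$; $\alpha\Lambda=\{\alpha\beta:r(\beta)=s(\alpha)\}$. $\Lambda$ is finitely aligned if for all $\alpha,\beta$ there is finite $G$ with $\alpha\Lambda\cap\beta\Lambda=\bigcup_{\varepsilon\in G}\varepsilon\Lambda$. For $\alpha\in\Lambda$, $\tau^\alpha(\beta)=\alpha\beta$ on $s(\alpha)\Lambda$ and $\sigma^\alpha:\alpha\Lambda\to s(\alpha)\Lambda$ is its inverse. A zigzag is a tuple $\zeta=(\alpha_1,\beta_1,\dots,\alpha_n,\beta_n)$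 with $r(\alpha_i)=r(\beta_i)$ and $s(\alpha_{i+1})=s(\beta_i)$; $s(\zeta)=s(\beta_n)$, $\mathcal Zv=\{\zeta:s(\zeta)=v\}$; $\varphi_\zeta=\sigma^{\alpha_1}\circ\tau^{\beta_1}\circ\cdots\circ\sigma^{\alpha_n}\circ\tau^{\beta_n}$ (partial map) with domain $A(\zeta)$. $\mathcal D^{(0)}_v$ is the set of nonempty $A(\zeta)$, $\zeta\in\mathcal Zv$ (it contains $\alpha\Lambda$ for $\alpha\in v\Lambda$), and $\mathcal A_v$ is the ring of sets generated by $\mathcal D^{(0)}_v$. A filter in $\mathcal D^{(0)}_v$ is a nonempty $C\subseteq\mathcal D^{(0)}_v$ closed under intersection and under supersets within $\mathcal D^{(0)}_v$; a finite $\mathcal F\subseteq\mathcal D^{(0)}_v$ covers $C$ if some $E\in C$ satisfies $E\subseteq\bigcup\mathcal F$; $v\Lambda^*$ is the set of filters $C$ in $\mathcal D^{(0)}_v$ such that every finite $\mathcal F\subseteq\mathcal D^{(0)}_v$ with $\mathcal F\cap C=\varnothing$ does not cover $C$. For $C\in v\Lambda^*$, $\mathcal U_C$ denotes the unique ultrafilter $\mathcal U$ of the ring $\mathcal A_v$ with $\mathcal U\cap\mathcal D^{(0)}_v=C$ (it is generated by the sets $E\setminus\bigcup\mathcal F$ with $E\in C$ and $\mathcal F$ finite not covering $C$). A nonempty $H\subseteq\Lambda$ is directed if $H\cap\alpha\Lambda\cap\beta\Lambda\ne\varnothing$ for all $\alpha,\beta\in H$, and hereditary if $\gamma\in H$ whenever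 $\alpha\in H$ and $\alpha\in\gamma\Lambda$. *)

theory Defs
  imports Main
begin

text \<open>A small category is given by its (set of) morphisms L, range and source
maps r, s (objects are identified with identity morphisms) and composition c,
where c a b is the composite "a b" (defined when s a = r b).\<close>

definition small_cat :: "'a set \<Rightarrow> ('a \<Rightarrow> 'a) \<Rightarrow> ('a \<Rightarrow> 'a) \<Rightarrow> ('a \<Rightarrow> 'a \<Rightarrow> 'a) \<Rightarrow> bool" where
  "small_cat L r s c \<longleftrightarrow>
     (\<forall>a\<in>L. r a \<in> L \<and> s a \<in> L \<and> r (r a) = r a \<and> s (r a) = r a \<and> r (s a) = s a
            \<and> s (s a) = s a \<and> c (r a) a = a \<and> c a (s a) = a) \<and>
     (\<forall>a\<in>L. \<forall>b\<in>L. s a = r b \<longrightarrow> c a b \<in> L \<and> r (c a b) = r a \<and> s (c a b) = s b) \<and>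
     (\<forall>a\<in>L. \<forall>b\<in>L. \<forall>d\<in>L. s a = r b \<longrightarrow> s b = r d \<longrightarrow> c (c a b) d = c a (c b d))"

definition objects :: "'a set \<Rightarrow> ('a \<Rightarrow> 'a) \<Rightarrow> 'a set" where
  "objects L r = {a \<in> L. r a = a}"

definition left_cancellative :: "'a set \<Rightarrow> ('a \<Rightarrow> 'a) \<Rightarrow> ('a \<Rightarrow> 'a) \<Rightarrow> ('a \<Rightarrow> 'a \<Rightarrow> 'a) \<Rightarrow> bool" where
  "left_cancellative L r s c \<longleftrightarrow>
     (\<forall>a\<in>L. \<forall>b\<in>L. \<forall>d\<in>L. s a = r b \<longrightarrow> s a = r d \<longrightarrow> c a b = c a d \<longrightarrow> b = d)"

definition LCSC :: "'a set \<Rightarrow> ('a \<Rightarrow> 'a) \<Rightarrow> ('a \<Rightarrow> 'a) \<Rightarrow> ('a \<Rightarrow> 'a \<Rightarrow> 'a) \<Rightarrow> bool" where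
  "LCSC L r s c \<longleftrightarrow> small_cat L r s c \<and> left_cancellative L r s c"

definition rset :: "'a set \<Rightarrow> ('a \<Rightarrow> 'a) \<Rightarrow> 'a \<Rightarrow> 'a set" where
  "rset L r v = {a \<in> L. r a = v}"

definition mset :: "'a set \<Rightarrow> ('a \<Rightarrow> 'a) \<Rightarrow> ('a \<Rightarrow> 'a) \<Rightarrow> ('a \<Rightarrow> 'a \<Rightarrow> 'a) \<Rightarrow> 'a \<Rightarrow> 'a set" where
  "mset L r s c a = {c a b | b. b \<in> L \<and> r b = s a}"

definition finitely_aligned :: "'a set \<Rightarrow> ('a \<Rightarrow> 'a) \<Rightarrow> ('a \<Rightarrow> 'a) \<Rightarrow> ('a \<Rightarrow> 'a \<Rightarrow> 'a) \<Rightarrow> bool" where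
  "finitely_aligned L r s c \<longleftrightarrow>
     (\<forall>a\<in>L. \<forall>b\<in>L. \<exists>G. finite G \<and> G \<subseteq> L \<and>
        mset L r s c a \<inter> mset L r s c b = (\<Union>e\<in>G. mset L r s c e))"

definition tau :: "'a set \<Rightarrow> ('a \<Rightarrow> 'a) \<Rightarrow> ('a \<Rightarrow> 'a) \<Rightarrow> ('a \<Rightarrow> 'a \<Rightarrow> 'a) \<Rightarrow> 'a \<Rightarrow> 'a \<Rightarrow> 'a option" where
  "tau L r s c b x = (if x \<in> L \<and> r x = s b then Some (c b x) else None)"

definition sigma :: "'a set \<Rightarrow> ('a \<Rightarrow> 'a) \<Rightarrow> ('a \<Rightarrow> 'a) \<Rightarrow> ('a \<Rightarrow> 'a \<Rightarrow> 'a) \<Rightarrow> 'a \<Rightarrow> 'a \<Rightarrow> 'a option" where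
  "sigma L r s c a x = (if x \<in> mset L r s c a
      then Some (THE y. y \<in> L \<and> r y = s a \<and> c a y = x) else None)"

text \<open>A zigzag (alpha_1,beta_1,...,alpha_n,beta_n) is the list [(alpha_1,beta_1),...,(alpha_n,beta_n)], n \<ge> 1.\<close>
definition is_zigzag :: "'a set \<Rightarrow> ('a \<Rightarrow> 'a) \<Rightarrow> ('a \<Rightarrow> 'a) \<Rightarrow> ('a \<times> 'a) list \<Rightarrow> bool" where
  "is_zigzag L r s z \<longleftrightarrow> z \<noteq> [] \<and>
     (\<forall>(a, b) \<in> set z. a \<in> L \<and> b \<in> L \<and> r a = r b) \<and>
     (\<forall>i. Suc i < length z \<longrightarrow> s (fst (z ! Suc i)) = s (snd (z ! i)))"

definition zz_source :: "('a \<Rightarrow> 'a) \<Rightarrow> ('a \<times> 'a) list \<Rightarrow> 'a" where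
  "zz_source s z = s (snd (last z))"

text \<open>phi_zeta = sigma^{alpha_1} o tau^{beta_1} o ... o sigma^{alpha_n} o tau^{beta_n}\<close>
primrec zz_map :: "'a set \<Rightarrow> ('a \<Rightarrow> 'a) \<Rightarrow> ('a \<Rightarrow> 'a) \<Rightarrow> ('a \<Rightarrow> 'a \<Rightarrow> 'a) \<Rightarrow> ('a \<times> 'a) list \<Rightarrow> 'a \<Rightarrow> 'a option" where
  "zz_map L r s c [] x = Some x"
| "zz_map L r s c (p # z) x =
     Option.bind (zz_map L r s c z x) (\<lambda>y. Option.bind (tau L r s c (snd p) y) (sigma L r s c (fst p)))"

definition zz_dom :: "'a set \<Rightarrow> ('a \<Rightarrow> 'a) \<Rightarrow> ('a \<Rightarrow> 'a) \<Rightarrow> ('a \<Rightarrow> 'a \<Rightarrow> 'a) \<Rightarrow> ('a \<times> 'a) list \<Rightarrow> 'a set" where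
  "zz_dom L r s c z = {x. zz_map L r s c z x \<noteq> None}"

definition D0 :: "'a set \<Rightarrow> ('a \<Rightarrow> 'a) \<Rightarrow> ('a \<Rightarrow> 'a) \<Rightarrow> ('a \<Rightarrow> 'a \<Rightarrow> 'a) \<Rightarrow> 'a \<Rightarrow> 'a set set" where
  "D0 L r s c v = {zz_dom L r s c z | z. is_zigzag L r s z \<and> zz_source s z = v \<and> zz_dom L r s c z \<noteq> {}}"

inductive_set ring_gen :: "'b set set \<Rightarrow> 'b set set" for G where
  basic: "A \<in> G \<Longrightarrow> A \<in> ring_gen G"
| empty: "{} \<in> ring_gen G"
| union: "A \<in> ring_gen G \<Longrightarrow> B \<in> ring_gen G \<Longrightarrow> A \<union> B \<in> ring_gen G"
| diff: "A \<in> ring_gen G \<Longrightarrow> B \<in> ring_gen G \<Longrightarrow> A - B \<in> ring_gen G"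

definition A_ring :: "'a set \<Rightarrow> ('a \<Rightarrow> 'a) \<Rightarrow> ('a \<Rightarrow> 'a) \<Rightarrow> ('a \<Rightarrow> 'a \<Rightarrow> 'a) \<Rightarrow> 'a \<Rightarrow> 'a set set" where
  "A_ring L r s c v = ring_gen (D0 L r s c v)"

definition filter_in :: "'b set set \<Rightarrow> 'b set set \<Rightarrow> bool" where
  "filter_in D C \<longleftrightarrow> C \<noteq> {} \<and> C \<subseteq> D \<and> (\<forall>E\<in>C. \<forall>F\<in>C. E \<inter> F \<in> C) \<and>
     (\<forall>E\<in>C. \<forall>F\<in>D. E \<subseteq> F \<longrightarrow> F \<in> C)"

definition ultrafilter_in :: "'b set set \<Rightarrow> 'b set set \<Rightarrow> bool" where
  "ultrafilter_in R U \<longleftrightarrow> filter_in R U \<and> {} \<notin> U \<and>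
     (\<forall>U'. filter_in R U' \<and> {} \<notin> U' \<and> U \<subseteq> U' \<longrightarrow> U' = U)"

definition Lstar :: "'a set \<Rightarrow> ('a \<Rightarrow> 'a) \<Rightarrow> ('a \<Rightarrow> 'a) \<Rightarrow> ('a \<Rightarrow> 'a \<Rightarrow> 'a) \<Rightarrow> 'a \<Rightarrow> 'a set set set" where
  "Lstar L r s c v = {C. filter_in (D0 L r s c v) C \<and>
     (\<forall>F. finite F \<and> F \<subseteq> D0 L r s c v \<and> F \<inter> C = {} \<longrightarrow> \<not> (\<exists>E\<in>C. E \<subseteq> \<Union>F))}"

definition U_of :: "'a set \<Rightarrow> ('a \<Rightarrow> 'a) \<Rightarrow> ('a \<Rightarrow> 'a) \<Rightarrow> ('a \<Rightarrow> 'a \<Rightarrow> 'a) \<Rightarrow> 'a \<Rightarrow> 'a set set \<Rightarrow> 'a set set" where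
  "U_of L r s c v C = (THE U. ultrafilter_in (A_ring L r s c v) U \<and> U \<inter> D0 L r s c v = C)"

definition directed :: "'a set \<Rightarrow> ('a \<Rightarrow> 'a) \<Rightarrow> ('a \<Rightarrow> 'a) \<Rightarrow> ('a \<Rightarrow> 'a \<Rightarrow> 'a) \<Rightarrow> 'a set \<Rightarrow> bool" where
  "directed L r s c H \<longleftrightarrow> H \<noteq> {} \<and>
     (\<forall>a\<in>H. \<forall>b\<in>H. H \<inter> mset L r s c a \<inter> mset L r s c b \<noteq> {})"

definition hereditary :: "'a set \<Rightarrow> ('a \<Rightarrow> 'a) \<Rightarrow> ('a \<Rightarrow> 'a) \<Rightarrow> ('a \<Rightarrow> 'a \<Rightarrow> 'a) \<Rightarrow> 'a set \<Rightarrow> bool" where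
  "hereditary L r s c H \<longleftrightarrow> H \<noteq> {} \<and>
     (\<forall>a\<in>H. \<forall>g\<in>L. a \<in> mset L r s c g \<longrightarrow> g \<in> H)"

definition H_of :: "'a set \<Rightarrow> ('a \<Rightarrow> 'a) \<Rightarrow> ('a \<Rightarrow> 'a) \<Rightarrow> ('a \<Rightarrow> 'a \<Rightarrow> 'a) \<Rightarrow> 'a \<Rightarrow> 'a set set \<Rightarrow> 'a set" where
  "H_of L r s c v C = {a \<in> rset L r v. mset L r s c a \<in> C}"

definition C_of :: "'a set \<Rightarrow> ('a \<Rightarrow> 'a) \<Rightarrow> ('a \<Rightarrow> 'a) \<Rightarrow> ('a \<Rightarrow> 'a \<Rightarrow> 'a) \<Rightarrow> 'a \<Rightarrow> 'a set \<Rightarrow> 'a set set" where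
  "C_of L r s c v H = {E \<in> D0 L r s c v. \<exists>a\<in>H. mset L r s c a \<subseteq> E}"

end

theory Submission
  imports Defs
begin

text \<open>
  By finite alignment, the preimage of a principal set \<open>\<gamma>\<Lambda>\<close> under one zigzag step
  \<open>\<sigma>\<^sup>\<alpha> \<circ> \<tau>\<^sup>\<beta>\<close> is a finite union of principal sets; by induction along the zigzag, every
  \<open>E \<in> \<D>\<^sup>(\<^sup>0\<^sup>)\<^sub>v\<close> is a finite union of sets \<open>\<alpha>\<Lambda>\<close>, and \<open>E\<close> contains \<open>\<alpha>\<Lambda>\<close> as soon as it
  contains \<open>\<alpha>\<close>. The covering condition defining \<open>v\<Lambda>\<^sup>*\<close> therefore puts a principal set
  of \<open>C\<close> below every member of \<open>C\<close>, so \<open>C\<close> is recovered from \<open>H(C)\<close>, and finite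
  alignment again makes \<open>H(C)\<close> directed. Conversely the members of \<open>\<D>\<^sup>(\<^sup>0\<^sup>)\<^sub>v\<close> that meet a
  directed hereditary \<open>H\<close> are exactly those containing some \<open>\<alpha>\<Lambda>\<close> with \<open>\<alpha> \<in> H\<close>.
  For the ultrafilter, an induction over the ring shows that every \<open>A \<in> \<A>\<^sub>v\<close> either
  contains or misses some \<open>H \<inter> \<alpha>\<Lambda>\<close> with \<open>\<alpha> \<in> H\<close>; this makes the proposed family an
  ultrafilter with trace \<open>C\<close>, and an ultrafilter of a generated ring is determined by
  its trace on the generators.
\<close>

section \<open>Ultrafilters of a generated ring of sets\<close>

lemma ring_gen_Int: "A \<in> ring_gen G \<Longrightarrow> B \<in> ring_gen G \<Longrightarrow> A \<inter> B \<in> ring_gen G"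
  by (metis Diff_Diff_Int ring_gen.diff)

lemma ultrafilter_inD:
  assumes "ultrafilter_in R U"
  shows "U \<subseteq> R" "{} \<notin> U" "\<And>A B. A \<in> U \<Longrightarrow> B \<in> U \<Longrightarrow> A \<inter> B \<in> U"
    "\<And>A B. A \<in> U \<Longrightarrow> B \<in> R \<Longrightarrow> A \<subseteq> B \<Longrightarrow> B \<in> U" "U \<noteq> {}"
    "\<And>U'. filter_in R U' \<Longrightarrow> {} \<notin> U' \<Longrightarrow> U \<subseteq> U' \<Longrightarrow> U' = U"
  using assms unfolding ultrafilter_in_def filter_in_def by auto

lemma ultrafilter_inI_disjoint:
  assumes filter: "filter_in R U" and proper: "{} \<notin> U"
    and decide: "\<And>X. X \<in> R \<Longrightarrow> X \<in> U \<or> (\<exists>B\<in>U. B \<inter> X = {})"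
  shows "ultrafilter_in R U"
  unfolding ultrafilter_in_def
proof (intro conjI allI impI filter proper)
  fix U' assume U': "filter_in R U' \<and> {} \<notin> U' \<and> U \<subseteq> U'"
  hence U'R: "U' \<subseteq> R" and U'_Int: "\<And>E F. E \<in> U' \<Longrightarrow> F \<in> U' \<Longrightarrow> E \<inter> F \<in> U'"
    and proper': "{} \<notin> U'" and sub: "U \<subseteq> U'"
    unfolding filter_in_def by auto
  have "X \<in> U" if X: "X \<in> U'" for X
  proof -
    have "B \<inter> X \<noteq> {}" if "B \<in> U" for B
      using U'_Int[of B X] X that sub proper' by auto
    thus ?thesis using decide U'R X by blast
  qed
  with sub show "U' = U" by blast
qed

lemma ultrafilter_in_disjoint:
  assumes U: "ultrafilter_in (ring_gen G) U" and A: "A \<in> ring_gen G" "A \<notin> U"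
  shows "\<exists>B\<in>U. A \<inter> B = {}"
proof (rule ccontr)
  assume "\<not> (\<exists>B\<in>U. A \<inter> B = {})"
  hence meets: "\<And>B. B \<in> U \<Longrightarrow> A \<inter> B \<noteq> {}" by blast
  define U' where "U' = {X \<in> ring_gen G. \<exists>B\<in>U. A \<inter> B \<subseteq> X}"
  note Ufacts = ultrafilter_inD[OF U]
  have "A \<in> U'" using A(1) Ufacts(5) unfolding U'_def by blast
  have "filter_in (ring_gen G) U'"
    unfolding filter_in_def
  proof (intro conjI ballI impI)
    show "U' \<noteq> {}" using \<open>A \<in> U'\<close> by blast
    show "U' \<subseteq> ring_gen G" unfolding U'_def by blast
  next
    fix E F assume "E \<in> U'" "F \<in> U'"
    then obtain B1 B2 where B: "B1 \<in> U" "A \<inter> B1 \<subseteq> E" "E \<in> ring_gen G"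
      "B2 \<in> U" "A \<inter> B2 \<subseteq> F" "F \<in> ring_gen G"
      unfolding U'_def by blast
    have "B1 \<inter> B2 \<in> U" "A \<inter> (B1 \<inter> B2) \<subseteq> E \<inter> F" "E \<inter> F \<in> ring_gen G"
      using Ufacts(3) ring_gen_Int B by blast+
    thus "E \<inter> F \<in> U'" unfolding U'_def by blast
  next
    fix E F assume "E \<in> U'" "F \<in> ring_gen G" "E \<subseteq> F"
    thus "F \<in> U'" unfolding U'_def by blast
  qed
  moreover have "{} \<notin> U'" using meets unfolding U'_def by blast
  moreover have "U \<subseteq> U'" using Ufacts(1) unfolding U'_def by blast
  ultimately have "U' = U" by (rule Ufacts(6))
  thus False using \<open>A \<in> U'\<close> A(2) by blast
qed

lemma ultrafilter_in_Un_iff: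
  assumes U: "ultrafilter_in (ring_gen G) U" and AB: "A \<in> ring_gen G" "B \<in> ring_gen G"
  shows "A \<union> B \<in> U \<longleftrightarrow> A \<in> U \<or> B \<in> U"
proof
  assume AB_in: "A \<union> B \<in> U"
  show "A \<in> U \<or> B \<in> U"
  proof (rule ccontr)
    assume "\<not> (A \<in> U \<or> B \<in> U)"
    then obtain B1 B2 where "B1 \<in> U" "B2 \<in> U" "A \<inter> B1 = {}" "B \<inter> B2 = {}"
      using ultrafilter_in_disjoint[OF U AB(1)] ultrafilter_in_disjoint[OF U AB(2)] by blast
    moreover from calculation have "(A \<union> B) \<inter> B1 \<inter> B2 \<in> U"
      using ultrafilter_inD(3)[OF U] AB_in by meson
    moreover from calculation have "(A \<union> B) \<inter> B1 \<inter> B2 = {}" by blast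
    ultimately show False using ultrafilter_inD(2)[OF U] by simp
  qed
next
  assume "A \<in> U \<or> B \<in> U"
  thus "A \<union> B \<in> U" using ultrafilter_inD(4)[OF U _ ring_gen.union[OF AB]] by auto
qed

lemma ultrafilter_in_Diff_iff:
  assumes U: "ultrafilter_in (ring_gen G) U" and AB: "A \<in> ring_gen G" "B \<in> ring_gen G"
  shows "A - B \<in> U \<longleftrightarrow> A \<in> U \<and> B \<notin> U"
proof
  assume AB_in: "A - B \<in> U"
  have "(A - B) \<inter> B \<notin> U" using ultrafilter_inD(2)[OF U] by (simp add: Int_commute)
  thus "A \<in> U \<and> B \<notin> U"
    using ultrafilter_inD(3,4)[OF U] AB_in AB(1) by blast
next
  assume "A \<in> U \<and> B \<notin> U"
  moreover obtain B' where "B' \<in> U" "B \<inter> B' = {}"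
    using ultrafilter_in_disjoint[OF U AB(2)] calculation by blast
  ultimately have "A \<inter> B' \<in> U" "A \<inter> B' \<subseteq> A - B" using ultrafilter_inD(3)[OF U] by blast+
  thus "A - B \<in> U" using ultrafilter_inD(4)[OF U _ ring_gen.diff[OF AB]] by blast
qed

lemma ultrafilter_in_ring_gen_eqI:
  assumes U1: "ultrafilter_in (ring_gen G) U1" and U2: "ultrafilter_in (ring_gen G) U2"
    and trace: "U1 \<inter> G = U2 \<inter> G"
  shows "U1 = U2"
proof -
  have "A \<in> U1 \<longleftrightarrow> A \<in> U2" if "A \<in> ring_gen G" for A
    using that
  proof (induction A rule: ring_gen.induct)
    case (basic A) thus ?case using trace by blast
  next
    case empty thus ?case using ultrafilter_inD(2)[OF U1] ultrafilter_inD(2)[OF U2] by blast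
  next
    case (union A B) thus ?case
      using ultrafilter_in_Un_iff[OF U1] ultrafilter_in_Un_iff[OF U2] by blast
  next
    case (diff A B) thus ?case
      using ultrafilter_in_Diff_iff[OF U1] ultrafilter_in_Diff_iff[OF U2] by blast
  qed
  thus ?thesis using ultrafilter_inD(1)[OF U1] ultrafilter_inD(1)[OF U2] by blast
qed

section \<open>Left cancellative small categories and zigzag maps\<close>

locale lcsc =
  fixes L :: "'a set" and r s :: "'a \<Rightarrow> 'a" and c :: "'a \<Rightarrow> 'a \<Rightarrow> 'a"
  assumes lcsc: "LCSC L r s c"
begin

abbreviation principal :: "'a \<Rightarrow> 'a set" where
  "principal a \<equiv> mset L r s c a"

lemma r_in_L[simp]: "a \<in> L \<Longrightarrow> r a \<in> L" and s_in_L[simp]: "a \<in> L \<Longrightarrow> s a \<in> L"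
  and r_r[simp]: "a \<in> L \<Longrightarrow> r (r a) = r a" and s_r[simp]: "a \<in> L \<Longrightarrow> s (r a) = r a"
  and r_s[simp]: "a \<in> L \<Longrightarrow> r (s a) = s a" and s_s[simp]: "a \<in> L \<Longrightarrow> s (s a) = s a"
  and comp_r[simp]: "a \<in> L \<Longrightarrow> c (r a) a = a" and comp_s[simp]: "a \<in> L \<Longrightarrow> c a (s a) = a"
  using lcsc unfolding LCSC_def small_cat_def by auto

lemma comp_in_L[simp]: "a \<in> L \<Longrightarrow> b \<in> L \<Longrightarrow> s a = r b \<Longrightarrow> c a b \<in> L"
  and r_comp[simp]: "a \<in> L \<Longrightarrow> b \<in> L \<Longrightarrow> s a = r b \<Longrightarrow> r (c a b) = r a"
  and s_comp[simp]: "a \<in> L \<Longrightarrow> b \<in> L \<Longrightarrow> s a = r b \<Longrightarrow> s (c a b) = s b"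
  using lcsc unfolding LCSC_def small_cat_def by auto

lemma comp_assoc:
  "a \<in> L \<Longrightarrow> b \<in> L \<Longrightarrow> d \<in> L \<Longrightarrow> s a = r b \<Longrightarrow> s b = r d \<Longrightarrow> c (c a b) d = c a (c b d)"
  using lcsc unfolding LCSC_def small_cat_def by blast

lemma comp_cancel:
  "a \<in> L \<Longrightarrow> b \<in> L \<Longrightarrow> d \<in> L \<Longrightarrow> s a = r b \<Longrightarrow> s a = r d \<Longrightarrow> c a b = c a d \<Longrightarrow> b = d"
  using lcsc unfolding LCSC_def left_cancellative_def by blast

lemma mem_principal_iff: "x \<in> principal a \<longleftrightarrow> (\<exists>b. b \<in> L \<and> r b = s a \<and> x = c a b)"
  unfolding mset_def by auto

lemma mem_principal_self: "a \<in> L \<Longrightarrow> a \<in> principal a"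
  unfolding mem_principal_iff by (rule exI[of _ "s a"]) auto

lemma mem_principalD: "a \<in> L \<Longrightarrow> x \<in> principal a \<Longrightarrow> x \<in> L \<and> r x = r a"
  unfolding mem_principal_iff by auto

lemma principal_subset: "a \<in> L \<Longrightarrow> x \<in> principal a \<Longrightarrow> principal x \<subseteq> principal a"
proof
  fix y assume a: "a \<in> L" and "x \<in> principal a" "y \<in> principal x"
  then obtain b w where b: "b \<in> L" "r b = s a" "x = c a b"
    and w: "w \<in> L" "r w = s x" "y = c x w"
    unfolding mem_principal_iff by auto
  have "s x = s b" using a b by simp
  hence "y = c a (c b w)" using a b w comp_assoc by simp
  moreover have "c b w \<in> L" "r (c b w) = s a" using a b w \<open>s x = s b\<close> by auto
  ultimately show "y \<in> principal a" unfolding mem_principal_iff by blast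
qed

lemma mem_principal_comp_iff:
  assumes h: "h \<in> L" "b \<in> L" "r h = s b"
  shows "y \<in> principal h \<longleftrightarrow> y \<in> L \<and> r y = s b \<and> c b y \<in> principal (c b h)"
proof
  assume "y \<in> principal h"
  then obtain w where w: "w \<in> L" "r w = s h" "y = c h w" unfolding mem_principal_iff by auto
  have "c b y = c (c b h) w" using h w comp_assoc[of b h w] by simp
  moreover have "r w = s (c b h)" "y \<in> L" "r y = s b" using h w by simp_all
  ultimately show "y \<in> L \<and> r y = s b \<and> c b y \<in> principal (c b h)"
    unfolding mem_principal_iff using w(1) by blast
next
  assume y: "y \<in> L \<and> r y = s b \<and> c b y \<in> principal (c b h)"
  then obtain w where w: "w \<in> L" "r w = s (c b h)" "c b y = c (c b h) w"
    unfolding mem_principal_iff by auto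
  have rw: "r w = s h" using w h by simp
  have "c (c b h) w = c b (c h w)" using comp_assoc[of b h w] h w rw by simp
  hence "c b y = c b (c h w)" using w(3) by simp
  moreover have "c h w \<in> L" "r (c h w) = s b" using h w rw by simp_all
  ultimately have "y = c h w" using comp_cancel[of b y "c h w"] h y by metis
  thus "y \<in> principal h" using w(1) rw unfolding mem_principal_iff by blast
qed

lemma sigma_eq_Some_iff:
  assumes "a \<in> L"
  shows "sigma L r s c a x = Some t \<longleftrightarrow> t \<in> L \<and> r t = s a \<and> c a t = x"
proof -
  have the_eq: "(THE y. y \<in> L \<and> r y = s a \<and> c a y = x) = t" if "t \<in> L \<and> r t = s a \<and> c a t = x" for t
    using that assms comp_cancel[of a _ t] by (intro the_equality) metis+
  show ?thesis
  proof
    assume t: "sigma L r s c a x = Some t"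
    then obtain y where y: "y \<in> L" "r y = s a" "x = c a y"
      unfolding sigma_def mem_principal_iff by (auto split: if_splits)
    hence "sigma L r s c a x = Some y" using the_eq[of y] unfolding sigma_def mem_principal_iff by auto
    with t y show "t \<in> L \<and> r t = s a \<and> c a t = x" by simp
  next
    assume "t \<in> L \<and> r t = s a \<and> c a t = x"
    thus "sigma L r s c a x = Some t" using the_eq unfolding sigma_def mem_principal_iff by auto
  qed
qed

definition zz_step :: "'a \<times> 'a \<Rightarrow> 'a \<Rightarrow> 'a option" where
  "zz_step p y = Option.bind (tau L r s c (snd p) y) (sigma L r s c (fst p))"

lemma zz_step_eq_Some_iff:
  "fst p \<in> L \<Longrightarrow> zz_step p y = Some t \<longleftrightarrow>
     y \<in> L \<and> r y = s (snd p) \<and> t \<in> L \<and> r t = s (fst p) \<and> c (snd p) y = c (fst p) t"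
  unfolding zz_step_def tau_def by (auto simp: sigma_eq_Some_iff)

lemma zz_map_Cons: "zz_map L r s c (p # z) x = Option.bind (zz_map L r s c z x) (zz_step p)"
  unfolding zz_step_def[abs_def] by simp

declare zz_map.simps(2)[simp del]

lemma zz_map_append:
  "zz_map L r s c (z1 @ z2) x = Option.bind (zz_map L r s c z2 x) (zz_map L r s c z1)"
  by (induction z1) (auto simp: zz_map_Cons)

definition pairs_in_L :: "('a \<times> 'a) list \<Rightarrow> bool" where
  "pairs_in_L z \<longleftrightarrow> (\<forall>p\<in>set z. fst p \<in> L \<and> snd p \<in> L)"

lemma pairs_in_L_Cons: "pairs_in_L (p # z) \<longleftrightarrow> fst p \<in> L \<and> snd p \<in> L \<and> pairs_in_L z"
  unfolding pairs_in_L_def by auto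

lemma zz_map_Cons_eq_SomeE:
  assumes "zz_map L r s c (p # z) x = Some y"
  obtains m where "zz_map L r s c z x = Some m" "zz_step p m = Some y"
  using assms by (auto simp: zz_map_Cons bind_eq_Some_conv)

definition zz_reverse :: "('a \<times> 'a) list \<Rightarrow> ('a \<times> 'a) list" where
  "zz_reverse z = rev (map prod.swap z)"

lemma zz_map_reverse:
  "pairs_in_L z \<Longrightarrow> zz_map L r s c z x = Some y \<Longrightarrow> zz_map L r s c (zz_reverse z) y = Some x"
proof (induction z arbitrary: y)
  case Nil thus ?case by (simp add: zz_reverse_def)
next
  case (Cons p z)
  obtain m where m: "zz_map L r s c z x = Some m" "zz_step p m = Some y"
    using Cons.prems(2) by (rule zz_map_Cons_eq_SomeE)
  have p: "pairs_in_L z" "fst p \<in> L" "snd p \<in> L" using Cons.prems(1) by (auto simp: pairs_in_L_Cons)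
  have "zz_map L r s c [prod.swap p] y = Some m"
    using m(2) p by (auto simp: zz_step_eq_Some_iff zz_map_Cons)
  thus ?case using Cons.IH[OF p(1) m(1)] by (simp add: zz_map_append zz_reverse_def)
qed

lemma pairs_in_L_zigzag: "is_zigzag L r s z \<Longrightarrow> pairs_in_L z"
  unfolding is_zigzag_def pairs_in_L_def by auto

lemma mem_zz_dom_iff: "x \<in> zz_dom L r s c z \<longleftrightarrow> (\<exists>y. zz_map L r s c z x = Some y)"
  unfolding zz_dom_def by auto

lemma is_zigzag_iff_successively:
  "is_zigzag L r s z \<longleftrightarrow> z \<noteq> [] \<and> (\<forall>(a, b) \<in> set z. a \<in> L \<and> b \<in> L \<and> r a = r b) \<and>
   successively (\<lambda>p q. s (fst q) = s (snd p)) z"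
  unfolding is_zigzag_def successively_conv_nth by blast

lemma successively_source_sym:
  "successively (\<lambda>p q. s (snd p) = s (fst q)) z = successively (\<lambda>p q. s (fst q) = s (snd p)) z"
  by (induction z rule: induct_list012) auto

lemma zz_dom_back_and_forth:
  assumes "pairs_in_L z1" "pairs_in_L z2"
  shows "zz_dom L r s c (zz_reverse z1 @ z1 @ zz_reverse z2 @ z2) = zz_dom L r s c z1 \<inter> zz_dom L r s c z2"
proof (intro set_eqI iffI)
  fix x assume "x \<in> zz_dom L r s c (zz_reverse z1 @ z1 @ zz_reverse z2 @ z2)"
  then obtain y2 x' y1 where "zz_map L r s c z2 x = Some y2"
    "zz_map L r s c (zz_reverse z2) y2 = Some x'" "zz_map L r s c z1 x' = Some y1"
    using mem_zz_dom_iff by (auto simp: zz_map_append bind_eq_Some_conv)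
  moreover from calculation have "x' = x" using zz_map_reverse[OF assms(2)] by fastforce
  ultimately show "x \<in> zz_dom L r s c z1 \<inter> zz_dom L r s c z2" using mem_zz_dom_iff by auto
next
  fix x assume "x \<in> zz_dom L r s c z1 \<inter> zz_dom L r s c z2"
  then obtain y1 y2 where "zz_map L r s c z1 x = Some y1" "zz_map L r s c z2 x = Some y2"
    using mem_zz_dom_iff by blast
  thus "x \<in> zz_dom L r s c (zz_reverse z1 @ z1 @ zz_reverse z2 @ z2)"
    using zz_map_reverse[OF assms(1)] zz_map_reverse[OF assms(2)] mem_zz_dom_iff
    by (simp add: zz_map_append)
qed

lemma is_zigzag_back_and_forth:
  assumes "is_zigzag L r s z1" "is_zigzag L r s z2" "zz_source s z1 = zz_source s z2"
  shows "is_zigzag L r s (zz_reverse z1 @ z1 @ zz_reverse z2 @ z2)"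
  using assms unfolding is_zigzag_iff_successively zz_reverse_def zz_source_def
  by (auto simp: successively_append_iff successively_map hd_map last_map hd_rev last_rev
      successively_source_sym)

lemma zz_map_comp_right:
  "pairs_in_L z \<Longrightarrow> x \<in> L \<Longrightarrow> zz_map L r s c z x = Some y \<Longrightarrow>
   y \<in> L \<and> s y = s x \<and> (\<forall>w\<in>L. r w = s x \<longrightarrow> zz_map L r s c z (c x w) = Some (c y w))"
proof (induction z arbitrary: y)
  case Nil thus ?case by simp
next
  case (Cons p z)
  obtain m where m: "zz_map L r s c z x = Some m" "zz_step p m = Some y"
    using Cons.prems(3) by (rule zz_map_Cons_eq_SomeE)
  have p: "pairs_in_L z" "fst p \<in> L" "snd p \<in> L" using Cons.prems(1) by (auto simp: pairs_in_L_Cons)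
  note IH = Cons.IH[OF p(1) Cons.prems(2) m(1)]
  from m(2) p have st: "m \<in> L" "r m = s (snd p)" "y \<in> L" "r y = s (fst p)"
    "c (snd p) m = c (fst p) y"
    by (auto simp: zz_step_eq_Some_iff)
  have "s (c (snd p) m) = s m" "s (c (fst p) y) = s y"
    using s_comp[of "snd p" m] s_comp[of "fst p" y] st p by simp_all
  hence sy: "s y = s x" using IH st by simp
  show ?case
  proof (intro conjI ballI impI)
    fix w assume w: "w \<in> L" "r w = s x"
    have "zz_step p (c m w) = Some (c y w)"
      unfolding zz_step_eq_Some_iff[OF p(2)] using st w sy IH p
      by (auto simp: comp_assoc[symmetric])
    thus "zz_map L r s c (p # z) (c x w) = Some (c y w)"
      using IH w by (simp add: zz_map_Cons)
  qed (use st sy in auto)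
qed

lemma zz_map_arg:
  "pairs_in_L z \<Longrightarrow> z \<noteq> [] \<Longrightarrow> zz_map L r s c z x = Some y \<Longrightarrow> x \<in> L \<and> r x = s (snd (last z))"
proof (induction z arbitrary: y)
  case Nil thus ?case by simp
next
  case (Cons p z)
  obtain m where m: "zz_map L r s c z x = Some m" "zz_step p m = Some y"
    using Cons.prems(3) by (rule zz_map_Cons_eq_SomeE)
  have p: "pairs_in_L z" "fst p \<in> L" "snd p \<in> L" using Cons.prems(1) by (auto simp: pairs_in_L_Cons)
  show ?case
  proof (cases "z = []")
    case True thus ?thesis using m p by (auto simp: zz_step_eq_Some_iff)
  next
    case False thus ?thesis using Cons.IH[OF p(1) False m(1)] by simp
  qed
qed

lemma zz_map_value:
  "pairs_in_L z \<Longrightarrow> z \<noteq> [] \<Longrightarrow> zz_map L r s c z x = Some y \<Longrightarrow> y \<in> L \<and> r y = s (fst (hd z))"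
  by (cases z) (auto elim: zz_map_Cons_eq_SomeE simp: pairs_in_L_Cons zz_step_eq_Some_iff)

lemma zz_step_into_principal_iff:
  assumes "a \<in> L" "b \<in> L" "g \<in> L" "r g = s a"
  shows "(\<exists>t. zz_step (a, b) y = Some t \<and> t \<in> principal g) \<longleftrightarrow>
    y \<in> L \<and> r y = s b \<and> c b y \<in> principal (c a g)"
proof
  assume "\<exists>t. zz_step (a, b) y = Some t \<and> t \<in> principal g"
  then obtain t where "zz_step (a, b) y = Some t" "t \<in> principal g" by auto
  with assms obtain w where "y \<in> L" "r y = s b" "t \<in> L" "r t = s a" "c b y = c a t"
    "w \<in> L" "r w = s g" "t = c g w"
    by (auto simp: zz_step_eq_Some_iff mem_principal_iff)
  moreover from calculation have "c a t = c (c a g) w" "r w = s (c a g)"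
    using assms comp_assoc[of a g w] by simp_all
  ultimately show "y \<in> L \<and> r y = s b \<and> c b y \<in> principal (c a g)"
    unfolding mem_principal_iff by metis
next
  assume y: "y \<in> L \<and> r y = s b \<and> c b y \<in> principal (c a g)"
  then obtain w where w: "w \<in> L" "r w = s (c a g)" "c b y = c (c a g) w"
    unfolding mem_principal_iff by auto
  have rw: "r w = s g" using w assms by simp
  have "c (c a g) w = c a (c g w)" using comp_assoc[of a g w] assms w rw by simp
  hence "c b y = c a (c g w)" using w(3) by simp
  hence "zz_step (a, b) y = Some (c g w)" "c g w \<in> principal g"
    using assms y w(1) rw by (auto simp: zz_step_eq_Some_iff mem_principal_iff)
  thus "\<exists>t. zz_step (a, b) y = Some t \<and> t \<in> principal g" by blast
qed

end

section \<open>Preimages of principal sets under zigzag maps\<close>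

locale lcsc_finitely_aligned = lcsc +
  assumes finitely_aligned: "finitely_aligned L r s c"
begin

lemma comp_left_preimage_principal:
  assumes b: "b \<in> L" and d: "d \<in> L"
  shows "\<exists>G. finite G \<and> G \<subseteq> L \<and>
    {y. y \<in> L \<and> r y = s b \<and> c b y \<in> principal d} = (\<Union>h\<in>G. principal h)"
proof -
  from finitely_aligned b d obtain G0 where G0: "finite G0" "G0 \<subseteq> L"
    "principal b \<inter> principal d = (\<Union>e\<in>G0. principal e)"
    unfolding finitely_aligned_def by meson
  have "\<forall>e\<in>G0. \<exists>h. h \<in> L \<and> r h = s b \<and> e = c b h"
  proof
    fix e assume "e \<in> G0"
    hence "e \<in> principal b" using G0 mem_principal_self by blast
    thus "\<exists>h. h \<in> L \<and> r h = s b \<and> e = c b h" unfolding mem_principal_iff by blast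
  qed
  then obtain hf where hf: "\<And>e. e \<in> G0 \<Longrightarrow> hf e \<in> L \<and> r (hf e) = s b \<and> e = c b (hf e)"
    by metis
  have hf_iff: "y \<in> principal (hf e) \<longleftrightarrow> y \<in> L \<and> r y = s b \<and> c b y \<in> principal e"
    if "e \<in> G0" for e y
    using mem_principal_comp_iff[of "hf e" b y] hf[OF that] b by auto
  have "{y. y \<in> L \<and> r y = s b \<and> c b y \<in> principal d} = (\<Union>h\<in>hf ` G0. principal h)"
  proof (intro set_eqI iffI)
    fix y assume "y \<in> {y. y \<in> L \<and> r y = s b \<and> c b y \<in> principal d}"
    hence y: "y \<in> L" "r y = s b" "c b y \<in> principal d" by simp_all
    hence "c b y \<in> principal b" unfolding mem_principal_iff by auto
    with y G0(3) obtain e where "e \<in> G0" "c b y \<in> principal e" by blast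
    thus "y \<in> (\<Union>h\<in>hf ` G0. principal h)" using hf_iff y by blast
  next
    fix y assume "y \<in> (\<Union>h\<in>hf ` G0. principal h)"
    then obtain e where e: "e \<in> G0" "y \<in> principal (hf e)" by blast
    hence "y \<in> L" "r y = s b" "c b y \<in> principal e" using hf_iff by blast+
    moreover have "principal e \<subseteq> principal d" using G0(3) e(1) by blast
    ultimately show "y \<in> {y. y \<in> L \<and> r y = s b \<and> c b y \<in> principal d}" by blast
  qed
  thus ?thesis using G0 hf by (intro exI[of _ "hf ` G0"]) auto
qed

lemma zz_step_preimage_principal:
  assumes ab: "a \<in> L" "b \<in> L" and g: "g \<in> L"
  shows "\<exists>G. finite G \<and> G \<subseteq> L \<and>
    {y. \<exists>t. zz_step (a, b) y = Some t \<and> t \<in> principal g} = (\<Union>h\<in>G. principal h)"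
proof (cases "r g = s a")
  case False
  hence "{y. \<exists>t. zz_step (a, b) y = Some t \<and> t \<in> principal g} = {}"
    using ab g mem_principalD by (force simp: zz_step_eq_Some_iff)
  thus ?thesis by (intro exI[of _ "{}"]) auto
next
  case True
  have "c a g \<in> L" using ab g True by simp
  from comp_left_preimage_principal[OF ab(2) this] obtain G where "finite G" "G \<subseteq> L"
    "{y. y \<in> L \<and> r y = s b \<and> c b y \<in> principal (c a g)} = (\<Union>h\<in>G. principal h)"
    by blast
  moreover have "{y. \<exists>t. zz_step (a, b) y = Some t \<and> t \<in> principal g}
      = {y. y \<in> L \<and> r y = s b \<and> c b y \<in> principal (c a g)}"
    by (simp only: zz_step_into_principal_iff[OF ab g True])
  ultimately show ?thesis by (intro exI[of _ G]) simp
qed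

lemma zz_map_preimage_principal:
  "pairs_in_L z \<Longrightarrow> g \<in> L \<Longrightarrow> \<exists>G. finite G \<and> G \<subseteq> L \<and>
     {x. \<exists>y. zz_map L r s c z x = Some y \<and> y \<in> principal g} = (\<Union>h\<in>G. principal h)"
proof (induction z arbitrary: g)
  case Nil thus ?case by (intro exI[of _ "{g}"]) auto
next
  case (Cons p z)
  have p: "pairs_in_L z" "fst p \<in> L" "snd p \<in> L" using Cons.prems(1) by (auto simp: pairs_in_L_Cons)
  obtain G where G: "finite G" "G \<subseteq> L"
     "{y. \<exists>t. zz_step p y = Some t \<and> t \<in> principal g} = (\<Union>h\<in>G. principal h)"
    using zz_step_preimage_principal[OF p(2,3) Cons.prems(2), unfolded prod.collapse] by blast
  have "\<forall>h\<in>G. \<exists>K. finite K \<and> K \<subseteq> L \<and>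
      {x. \<exists>y. zz_map L r s c z x = Some y \<and> y \<in> principal h} = (\<Union>k\<in>K. principal k)"
  proof
    fix h assume "h \<in> G"
    hence "h \<in> L" using G(2) by blast
    thus "\<exists>K. finite K \<and> K \<subseteq> L \<and>
      {x. \<exists>y. zz_map L r s c z x = Some y \<and> y \<in> principal h} = (\<Union>k\<in>K. principal k)"
      by (rule Cons.IH[OF p(1)])
  qed
  from bchoice[OF this] obtain f where f: "\<forall>h\<in>G. finite (f h) \<and> f h \<subseteq> L \<and>
      {x. \<exists>y. zz_map L r s c z x = Some y \<and> y \<in> principal h} = (\<Union>k\<in>f h. principal k)"
    by blast
  have step_iff: "(\<exists>t. zz_step p m = Some t \<and> t \<in> principal g) \<longleftrightarrow> (\<exists>h\<in>G. m \<in> principal h)"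
    for m using G(3) by (auto simp: set_eq_iff)
  have "{x. \<exists>y. zz_map L r s c (p # z) x = Some y \<and> y \<in> principal g}
      = (\<Union>h\<in>G. {x. \<exists>y. zz_map L r s c z x = Some y \<and> y \<in> principal h})"
    using step_iff by (auto simp: zz_map_Cons bind_eq_Some_conv; blast)
  also have "\<dots> = (\<Union>h\<in>G. \<Union>k\<in>f h. principal k)" using f by (intro SUP_cong) auto
  also have "\<dots> = (\<Union>k\<in>(\<Union>h\<in>G. f h). principal k)" by auto
  finally show ?case using f G(1,2) by (intro exI[of _ "\<Union>h\<in>G. f h"]) blast
qed

end

section \<open>The sets \<open>\<D>\<^sup>(\<^sup>0\<^sup>)\<^sub>v\<close>\<close>

locale lcsc_object = lcsc_finitely_aligned +
  fixes v assumes v: "v \<in> objects L r"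
begin

abbreviation "Dv \<equiv> D0 L r s c v"
abbreviation "Lv \<equiv> Lstar L r s c v"
abbreviation "DHv \<equiv> {H. H \<subseteq> rset L r v \<and> directed L r s c H \<and> hereditary L r s c H}"

lemma object_v: "v \<in> L" "r v = v" "s v = v"
  using v unfolding objects_def by (auto, metis s_r)

lemma mem_rset_iff: "a \<in> rset L r v \<longleftrightarrow> a \<in> L \<and> r a = v"
  unfolding rset_def by simp

lemma mem_D0_iff: "E \<in> Dv \<longleftrightarrow>
    (\<exists>z. is_zigzag L r s z \<and> zz_source s z = v \<and> zz_dom L r s c z = E \<and> E \<noteq> {})"
  unfolding D0_def by auto

lemma D0_subset_rset: assumes "E \<in> Dv" shows "E \<subseteq> rset L r v"
proof
  fix x assume "x \<in> E"
  from assms obtain z where z: "is_zigzag L r s z" "zz_source s z = v" "zz_dom L r s c z = E"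
    unfolding mem_D0_iff by blast
  with \<open>x \<in> E\<close> obtain y where y: "zz_map L r s c z x = Some y"
    using mem_zz_dom_iff by blast
  have "z \<noteq> []" using z(1) unfolding is_zigzag_def by blast
  thus "x \<in> rset L r v"
    using zz_map_arg[OF pairs_in_L_zigzag[OF z(1)] _ y] z(2)
    unfolding zz_source_def mem_rset_iff by blast
qed

lemma D0_right_closed: assumes "E \<in> Dv" "x \<in> E" shows "principal x \<subseteq> E"
proof
  fix u assume "u \<in> principal x"
  then obtain w where w: "w \<in> L" "r w = s x" "u = c x w" unfolding mem_principal_iff by blast
  from assms obtain z where z: "is_zigzag L r s z" "zz_dom L r s c z = E"
    unfolding mem_D0_iff by blast
  with assms(2) obtain y where y: "zz_map L r s c z x = Some y"
    using mem_zz_dom_iff by blast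
  have "x \<in> L" using D0_subset_rset assms mem_rset_iff by blast
  hence "zz_map L r s c z u = Some (c y w)"
    using zz_map_comp_right[OF pairs_in_L_zigzag[OF z(1)] _ y] w by blast
  thus "u \<in> E" using z(2) mem_zz_dom_iff by blast
qed

lemma principal_in_D0: assumes "a \<in> rset L r v" shows "principal a \<in> Dv"
proof -
  have a: "a \<in> L" "r a = v" using assms mem_rset_iff by auto
  have "x \<in> zz_dom L r s c [(a, v)] \<longleftrightarrow> x \<in> principal a" for x
  proof -
    have "c v x = x" if "x \<in> L" "r x = v" using that comp_r by metis
    thus ?thesis using a object_v
      by (auto simp: mem_zz_dom_iff zz_map_Cons zz_step_eq_Some_iff mem_principal_iff)
  qed
  moreover have "is_zigzag L r s [(a, v)]" "zz_source s [(a, v)] = v"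
    unfolding is_zigzag_def zz_source_def using a object_v by auto
  moreover have "principal a \<noteq> {}" using mem_principal_self[OF a(1)] by blast
  ultimately show ?thesis unfolding mem_D0_iff by blast
qed

lemma D0_finite_union_principal:
  assumes "E \<in> Dv"
  shows "\<exists>G. finite G \<and> G \<subseteq> rset L r v \<and> E = (\<Union>g\<in>G. principal g)"
proof -
  from assms obtain z where z: "is_zigzag L r s z" "zz_dom L r s c z = E"
    unfolding mem_D0_iff by blast
  have ne: "z \<noteq> []" and ok: "pairs_in_L z" using z pairs_in_L_zigzag unfolding is_zigzag_def by auto
  define g where "g = s (fst (hd z))"
  have "fst (hd z) \<in> L" using ok ne unfolding pairs_in_L_def by auto
  hence g: "g \<in> L" "s g = g" unfolding g_def by simp_all
  txt \<open>Every value of \<open>\<phi>\<^sub>\<zeta>\<close> lies in \<open>g\<Lambda> = s(\<alpha>\<^sub>1)\<Lambda>\<close>, so \<open>E\<close> is the preimage of \<open>g\<Lambda>\<close>.\<close>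
  have "y \<in> principal g" if "zz_map L r s c z x = Some y" for x y
    using zz_map_value[OF ok ne that] g mem_principal_iff unfolding g_def
    by (metis comp_r)
  hence "E = {x. \<exists>y. zz_map L r s c z x = Some y \<and> y \<in> principal g}"
    using z(2) mem_zz_dom_iff by blast
  then obtain G where G: "finite G" "G \<subseteq> L" "E = (\<Union>h\<in>G. principal h)"
    using zz_map_preimage_principal[OF ok g(1)] by metis
  have "G \<subseteq> rset L r v" using G mem_principal_self D0_subset_rset[OF assms] by blast
  thus ?thesis using G by blast
qed

lemma D0_Int: assumes E: "E \<in> Dv" and F: "F \<in> Dv" and ne: "E \<inter> F \<noteq> {}"
  shows "E \<inter> F \<in> Dv"
proof -
  from E F obtain z1 z2 where z1: "is_zigzag L r s z1" "zz_source s z1 = v" "zz_dom L r s c z1 = E"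
    and z2: "is_zigzag L r s z2" "zz_source s z2 = v" "zz_dom L r s c z2 = F"
    unfolding mem_D0_iff by blast
  let ?w = "zz_reverse z1 @ z1 @ zz_reverse z2 @ z2"
  have "is_zigzag L r s ?w" using is_zigzag_back_and_forth z1(1,2) z2(1,2) by simp
  moreover have "zz_source s ?w = v"
    using z2(1,2) unfolding zz_source_def is_zigzag_def by simp
  moreover have "zz_dom L r s c ?w = E \<inter> F"
    using zz_dom_back_and_forth z1(1,3) z2(1,3) pairs_in_L_zigzag by blast
  ultimately show ?thesis unfolding mem_D0_iff using ne by blast
qed

section \<open>Filters in \<open>v\<Lambda>\<^sup>*\<close> and directed hereditary sets\<close>

lemma LstarD:
  assumes "C \<in> Lv"
  shows "C \<noteq> {}" "C \<subseteq> Dv" "\<And>E F. E \<in> C \<Longrightarrow> F \<in> C \<Longrightarrow> E \<inter> F \<in> C"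
    "\<And>E F. E \<in> C \<Longrightarrow> F \<in> Dv \<Longrightarrow> E \<subseteq> F \<Longrightarrow> F \<in> C"
    "\<And>F E. finite F \<Longrightarrow> F \<subseteq> Dv \<Longrightarrow> F \<inter> C = {} \<Longrightarrow> E \<in> C \<Longrightarrow> \<not> E \<subseteq> \<Union>F"
  using assms unfolding Lstar_def filter_in_def by auto

lemma Lstar_cover_principal:
  assumes C: "C \<in> Lv" and E: "E \<in> C" and G: "finite G" "G \<subseteq> rset L r v"
    and cover: "E \<subseteq> (\<Union>g\<in>G. principal g)"
  shows "\<exists>g\<in>G. principal g \<in> C"
proof (rule ccontr)
  assume none: "\<not> (\<exists>g\<in>G. principal g \<in> C)"
  have "finite (principal ` G)" using G(1) by simp
  moreover have "principal ` G \<subseteq> Dv" using G(2) principal_in_D0 by blast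
  moreover have "principal ` G \<inter> C = {}" using none by blast
  ultimately have "\<not> E \<subseteq> \<Union>(principal ` G)" by (rule LstarD(5)[OF C _ _ _ E])
  thus False using cover by simp
qed

lemma Lstar_principal_below:
  assumes C: "C \<in> Lv" and E: "E \<in> C"
  shows "\<exists>g\<in>rset L r v. principal g \<in> C \<and> principal g \<subseteq> E"
proof -
  have "E \<in> Dv" using LstarD(2)[OF C] E by blast
  then obtain G where G: "finite G" "G \<subseteq> rset L r v" "E = (\<Union>g\<in>G. principal g)"
    using D0_finite_union_principal by blast
  then obtain g where "g \<in> G" "principal g \<in> C"
    using Lstar_cover_principal[OF C E G(1,2)] by blast
  thus ?thesis using G(2,3) by blast
qed

lemma H_of_directed_hereditary:
  assumes C: "C \<in> Lv" shows "H_of L r s c v C \<in> DHv"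
proof -
  let ?H = "H_of L r s c v C"
  have ne: "?H \<noteq> {}"
    using Lstar_principal_below[OF C] LstarD(1)[OF C] unfolding H_of_def by blast
  have "directed L r s c ?H" unfolding directed_def
  proof (intro conjI ballI ne)
    fix a b assume "a \<in> ?H" "b \<in> ?H"
    hence a: "a \<in> L" "r a = v" and b: "b \<in> L" "principal a \<in> C" "principal b \<in> C"
      unfolding H_of_def rset_def by auto
    from finitely_aligned a b obtain G where G: "finite G" "G \<subseteq> L"
      "principal a \<inter> principal b = (\<Union>e\<in>G. principal e)"
      unfolding finitely_aligned_def by meson
    have Gv: "G \<subseteq> rset L r v"
      using G mem_principal_self mem_principalD[OF a(1)] a(2) mem_rset_iff by blast
    obtain e where "e \<in> G" "principal e \<in> C"
      using Lstar_cover_principal[OF C LstarD(3)[OF C b(2,3)] G(1) Gv] G(3) by blast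
    hence "e \<in> ?H" "e \<in> principal a \<inter> principal b"
      using Gv G mem_principal_self unfolding H_of_def by blast+
    thus "?H \<inter> principal a \<inter> principal b \<noteq> {}" by blast
  qed
  moreover have "hereditary L r s c ?H" unfolding hereditary_def
  proof (intro conjI ballI impI ne)
    fix a g assume a: "a \<in> ?H" and g: "g \<in> L" and ag: "a \<in> principal g"
    hence "principal a \<in> C" "g \<in> rset L r v"
      using mem_principalD[OF g ag] unfolding H_of_def mem_rset_iff by auto
    moreover have "principal a \<subseteq> principal g" using principal_subset[OF g ag] .
    ultimately show "g \<in> ?H"
      using LstarD(4)[OF C] principal_in_D0 unfolding H_of_def by blast
  qed
  ultimately show ?thesis unfolding H_of_def by blast
qed

lemma C_of_H_of: assumes C: "C \<in> Lv" shows "C_of L r s c v (H_of L r s c v C) = C"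
proof (intro set_eqI iffI)
  fix E assume "E \<in> C_of L r s c v (H_of L r s c v C)"
  then obtain a where "E \<in> Dv" "principal a \<in> C" "principal a \<subseteq> E"
    unfolding C_of_def H_of_def by blast
  thus "E \<in> C" using LstarD(4)[OF C] by blast
next
  fix E assume E: "E \<in> C"
  then obtain g where "g \<in> rset L r v" "principal g \<in> C" "principal g \<subseteq> E"
    using Lstar_principal_below[OF C] by blast
  moreover have "E \<in> Dv" using LstarD(2)[OF C] E by blast
  ultimately show "E \<in> C_of L r s c v (H_of L r s c v C)" unfolding C_of_def H_of_def by blast
qed

lemma directed_hereditaryD:
  assumes H: "H \<in> DHv"
  shows "H \<subseteq> rset L r v" "H \<noteq> {}"
    "\<And>a b. a \<in> H \<Longrightarrow> b \<in> H \<Longrightarrow> \<exists>e\<in>H. principal e \<subseteq> principal a \<and> principal e \<subseteq> principal b"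
    "\<And>a g. a \<in> H \<Longrightarrow> g \<in> L \<Longrightarrow> a \<in> principal g \<Longrightarrow> g \<in> H"
proof -
  show Hv: "H \<subseteq> rset L r v" "H \<noteq> {}" using H unfolding directed_def by auto
  show "\<And>a g. a \<in> H \<Longrightarrow> g \<in> L \<Longrightarrow> a \<in> principal g \<Longrightarrow> g \<in> H"
    using H unfolding hereditary_def by auto
  fix a b assume "a \<in> H" "b \<in> H"
  moreover from this obtain e where "e \<in> H" "e \<in> principal a" "e \<in> principal b"
    using H unfolding directed_def by blast
  ultimately show "\<exists>e\<in>H. principal e \<subseteq> principal a \<and> principal e \<subseteq> principal b"
    using principal_subset Hv(1) mem_rset_iff by blast
qed

lemma mem_C_of_iff:
  assumes H: "H \<subseteq> rset L r v" and E: "E \<in> Dv"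
  shows "E \<in> C_of L r s c v H \<longleftrightarrow> H \<inter> E \<noteq> {}"
proof
  assume "E \<in> C_of L r s c v H"
  then obtain a where "a \<in> H" "principal a \<subseteq> E" unfolding C_of_def by blast
  moreover have "a \<in> principal a" using H calculation(1) mem_principal_self mem_rset_iff by blast
  ultimately show "H \<inter> E \<noteq> {}" by blast
next
  assume "H \<inter> E \<noteq> {}"
  then obtain a where "a \<in> H" "principal a \<subseteq> E" using D0_right_closed[OF E] by blast
  thus "E \<in> C_of L r s c v H" using E unfolding C_of_def by blast
qed

lemma C_of_in_Lstar: assumes H: "H \<in> DHv" shows "C_of L r s c v H \<in> Lv"
proof -
  let ?C = "C_of L r s c v H"
  note HF = directed_hereditaryD[OF H]
  have self: "a \<in> principal a" if "a \<in> H" for a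
    using that HF(1) mem_principal_self mem_rset_iff by blast
  have "filter_in Dv ?C" unfolding filter_in_def
  proof (intro conjI ballI impI)
    obtain a where "a \<in> H" using HF(2) by blast
    moreover from this have "principal a \<in> Dv" using HF(1) principal_in_D0 by blast
    ultimately show "?C \<noteq> {}" unfolding C_of_def by blast
    show "?C \<subseteq> Dv" unfolding C_of_def by blast
  next
    fix E F assume "E \<in> ?C" "F \<in> ?C"
    then obtain a b where ab: "E \<in> Dv" "F \<in> Dv" "a \<in> H" "b \<in> H"
      "principal a \<subseteq> E" "principal b \<subseteq> F"
      unfolding C_of_def by blast
    obtain e where "e \<in> H" "principal e \<subseteq> principal a" "principal e \<subseteq> principal b"
      using HF(3)[OF ab(3,4)] by blast
    hence e: "e \<in> H" "principal e \<subseteq> E \<inter> F" using ab(5,6) by blast+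
    hence "E \<inter> F \<noteq> {}" using self by blast
    hence "E \<inter> F \<in> Dv" by (rule D0_Int[OF ab(1,2)])
    thus "E \<inter> F \<in> ?C" using e unfolding C_of_def by blast
  next
    fix E F assume "E \<in> ?C" "F \<in> Dv" "E \<subseteq> F"
    thus "F \<in> ?C" unfolding C_of_def by blast
  qed
  moreover have "\<not> E \<subseteq> \<Union>F" if F: "F \<subseteq> Dv" "F \<inter> ?C = {}" and E: "E \<in> ?C" for E F
  proof
    assume cover: "E \<subseteq> \<Union>F"
    obtain a where a: "a \<in> H" "principal a \<subseteq> E" using E unfolding C_of_def by blast
    with cover self obtain X where X: "X \<in> F" "a \<in> X" by blast
    hence "H \<inter> X \<noteq> {}" using a(1) by blast
    hence "X \<in> ?C" using mem_C_of_iff[OF HF(1)] F(1) X(1) by blast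
    thus False using X(1) F(2) by blast
  qed
  ultimately show ?thesis unfolding Lstar_def by blast
qed

lemma H_of_C_of: assumes H: "H \<in> DHv" shows "H_of L r s c v (C_of L r s c v H) = H"
proof (intro set_eqI iffI)
  note HF = directed_hereditaryD[OF H]
  fix a assume "a \<in> H_of L r s c v (C_of L r s c v H)"
  then obtain b where a: "a \<in> rset L r v" and b: "b \<in> H" "principal b \<subseteq> principal a"
    unfolding H_of_def C_of_def by blast
  have "b \<in> principal a" using b HF(1) mem_principal_self mem_rset_iff by blast
  thus "a \<in> H" using HF(4) a b(1) mem_rset_iff by blast
next
  note HF = directed_hereditaryD[OF H]
  fix a assume a: "a \<in> H"
  hence "principal a \<in> Dv" "a \<in> rset L r v" using HF(1) principal_in_D0 by blast+
  thus "a \<in> H_of L r s c v (C_of L r s c v H)" using a unfolding H_of_def C_of_def by blast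
qed

lemma H_of_mono_iff:
  assumes "C1 \<in> Lv" "C2 \<in> Lv"
  shows "C1 \<subseteq> C2 \<longleftrightarrow> H_of L r s c v C1 \<subseteq> H_of L r s c v C2"
proof
  show "C1 \<subseteq> C2 \<Longrightarrow> H_of L r s c v C1 \<subseteq> H_of L r s c v C2" unfolding H_of_def by blast
next
  assume "H_of L r s c v C1 \<subseteq> H_of L r s c v C2"
  hence "C_of L r s c v (H_of L r s c v C1) \<subseteq> C_of L r s c v (H_of L r s c v C2)"
    unfolding C_of_def by blast
  thus "C1 \<subseteq> C2" using C_of_H_of assms by simp
qed

lemma H_of_bij: "bij_betw (H_of L r s c v) Lv DHv"
proof (rule bij_betw_byWitness[where f' = "C_of L r s c v"])
  show "\<forall>C\<in>Lv. C_of L r s c v (H_of L r s c v C) = C" by (simp add: C_of_H_of)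
  show "\<forall>H\<in>DHv. H_of L r s c v (C_of L r s c v H) = H" by (rule ballI, rule H_of_C_of)
  show "H_of L r s c v ` Lv \<subseteq> DHv" by (rule image_subsetI, rule H_of_directed_hereditary)
  show "C_of L r s c v ` DHv \<subseteq> Lv" by (rule image_subsetI, rule C_of_in_Lstar)
qed

section \<open>The ultrafilter \<open>\<U>\<^sub>C\<close>\<close>

definition tail_in :: "'a set \<Rightarrow> 'a set \<Rightarrow> bool" where
  "tail_in H A \<longleftrightarrow> (\<exists>a\<in>H. H \<inter> principal a \<subseteq> A)"

definition tail_filter :: "'a set \<Rightarrow> 'a set set" where
  "tail_filter H = {A \<in> ring_gen Dv. tail_in H A}"

lemma tail_in_mono: "tail_in H A \<Longrightarrow> A \<subseteq> B \<Longrightarrow> tail_in H B"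
  unfolding tail_in_def by blast

lemma tail_in_Int:
  assumes H: "H \<in> DHv" and "tail_in H A" "tail_in H B"
  shows "tail_in H (A \<inter> B)"
proof -
  obtain a b where ab: "a \<in> H" "b \<in> H" "H \<inter> principal a \<subseteq> A" "H \<inter> principal b \<subseteq> B"
    using assms(2,3) unfolding tail_in_def by blast
  obtain e where "e \<in> H" "principal e \<subseteq> principal a" "principal e \<subseteq> principal b"
    using directed_hereditaryD(3)[OF H ab(1,2)] by blast
  thus ?thesis using ab(3,4) unfolding tail_in_def by blast
qed

lemma not_tail_in_empty: "H \<subseteq> rset L r v \<Longrightarrow> \<not> tail_in H {}"
  unfolding tail_in_def using mem_principal_self mem_rset_iff by blast

lemma tail_in_principal: "a \<in> H \<Longrightarrow> tail_in H (principal a)"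
  unfolding tail_in_def by blast

lemma tail_in_D0_iff:
  assumes H: "H \<subseteq> rset L r v" and E: "E \<in> Dv"
  shows "tail_in H E \<longleftrightarrow> H \<inter> E \<noteq> {}"
  using D0_right_closed[OF E] not_tail_in_empty[OF H] unfolding tail_in_def by blast

lemma D0_tail_in_or_Compl:
  assumes H: "H \<subseteq> rset L r v" "H \<noteq> {}" and E: "E \<in> Dv"
  shows "tail_in H E \<or> tail_in H (- E)"
proof (cases "H \<inter> E = {}")
  case True
  hence "tail_in H (- E)" using H(2) unfolding tail_in_def by blast
  thus ?thesis ..
next
  case False
  thus ?thesis using tail_in_D0_iff[OF H(1) E] by blast
qed

lemma ring_gen_tail_in_or_Compl:
  assumes H: "H \<in> DHv" and A: "A \<in> ring_gen Dv"
  shows "tail_in H A \<or> tail_in H (- A)"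
proof -
  note HF = directed_hereditaryD[OF H]
  from A show ?thesis
  proof (induction A rule: ring_gen.induct)
    case (basic E)
    thus ?case using D0_tail_in_or_Compl[OF HF(1,2)] by blast
  next
    case empty
    have "tail_in H UNIV" using HF(2) unfolding tail_in_def by blast
    thus ?case by simp
  next
    case (union A B)
    consider "tail_in H A \<or> tail_in H B" | "tail_in H (- A)" "tail_in H (- B)"
      using union.IH by blast
    thus ?case
    proof cases
      case 1
      have "A \<subseteq> A \<union> B" "B \<subseteq> A \<union> B" by blast+
      thus ?thesis using 1 tail_in_mono by metis
    next
      case 2 thus ?thesis using tail_in_Int[OF H, of "- A" "- B"] by simp
    qed
  next
    case (diff A B)
    consider "tail_in H (- A) \<or> tail_in H B" | "tail_in H A" "tail_in H (- B)"
      using diff.IH by blast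
    thus ?case
    proof cases
      case 1
      have "- A \<subseteq> - (A - B)" "B \<subseteq> - (A - B)" by blast+
      thus ?thesis using 1 tail_in_mono by metis
    next
      case 2 thus ?thesis using tail_in_Int[OF H, of A "- B"] by (simp add: Diff_eq)
    qed
  qed
qed

lemma principal_in_ring_gen: "a \<in> rset L r v \<Longrightarrow> principal a \<in> ring_gen Dv"
  using principal_in_D0 ring_gen.basic by blast

lemma filter_in_tail_filter:
  assumes H: "H \<in> DHv" shows "filter_in (ring_gen Dv) (tail_filter H)"
  unfolding filter_in_def
proof (intro conjI ballI impI)
  note HF = directed_hereditaryD[OF H]
  obtain a where "a \<in> H" using HF(2) by blast
  hence "principal a \<in> tail_filter H"
    using HF(1) principal_in_ring_gen tail_in_principal unfolding tail_filter_def by blast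
  thus "tail_filter H \<noteq> {}" by blast
  show "tail_filter H \<subseteq> ring_gen Dv" unfolding tail_filter_def by blast
next
  fix E F assume "E \<in> tail_filter H" "F \<in> tail_filter H"
  hence "E \<in> ring_gen Dv" "F \<in> ring_gen Dv" "tail_in H E" "tail_in H F"
    unfolding tail_filter_def by simp_all
  thus "E \<inter> F \<in> tail_filter H"
    using ring_gen_Int[of E Dv F] tail_in_Int[OF H, of E F] unfolding tail_filter_def by simp
next
  fix E F assume "E \<in> tail_filter H" "F \<in> ring_gen Dv" "E \<subseteq> F"
  thus "F \<in> tail_filter H" using tail_in_mono[of H E F] unfolding tail_filter_def by simp
qed

lemma tail_filter_ultrafilter:
  assumes H: "H \<in> DHv" shows "ultrafilter_in (ring_gen Dv) (tail_filter H)"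
proof (rule ultrafilter_inI_disjoint[OF filter_in_tail_filter[OF H]])
  note HF = directed_hereditaryD[OF H]
  show "{} \<notin> tail_filter H" using not_tail_in_empty[OF HF(1)] unfolding tail_filter_def by simp
  fix X assume X: "X \<in> ring_gen Dv"
  show "X \<in> tail_filter H \<or> (\<exists>B\<in>tail_filter H. B \<inter> X = {})"
  proof (cases "tail_in H X")
    case True thus ?thesis using X unfolding tail_filter_def by simp
  next
    case False
    then obtain a where a: "a \<in> H" "H \<inter> principal a \<subseteq> - X"
      using ring_gen_tail_in_or_Compl[OF H X] unfolding tail_in_def by blast
    have "principal a \<in> ring_gen Dv" using HF(1) a(1) principal_in_ring_gen by blast
    hence "principal a - X \<in> ring_gen Dv" using X by (rule ring_gen.diff)
    moreover have "tail_in H (principal a - X)" using a unfolding tail_in_def by blast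
    ultimately have "principal a - X \<in> tail_filter H" unfolding tail_filter_def by simp
    thus ?thesis by blast
  qed
qed

lemma tail_filter_trace: assumes H: "H \<in> DHv" shows "tail_filter H \<inter> Dv = C_of L r s c v H"
proof (intro set_eqI iffI)
  note HDv = directed_hereditaryD(1)[OF H]
  fix E assume "E \<in> tail_filter H \<inter> Dv"
  hence "E \<in> Dv" "tail_in H E" unfolding tail_filter_def by simp_all
  thus "E \<in> C_of L r s c v H" using mem_C_of_iff[OF HDv] tail_in_D0_iff[OF HDv] by simp
next
  note HDv = directed_hereditaryD(1)[OF H]
  fix E assume E: "E \<in> C_of L r s c v H"
  hence "E \<in> Dv" unfolding C_of_def by simp
  moreover from this have "tail_in H E" using E mem_C_of_iff[OF HDv] tail_in_D0_iff[OF HDv] by simp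
  ultimately show "E \<in> tail_filter H \<inter> Dv" using ring_gen.basic unfolding tail_filter_def by simp
qed

lemma U_of_eq_tail_filter:
  assumes C: "C \<in> Lv" shows "U_of L r s c v C = tail_filter (H_of L r s c v C)"
proof -
  have H: "H_of L r s c v C \<in> DHv" using H_of_directed_hereditary[OF C] .
  have "ultrafilter_in (A_ring L r s c v) (tail_filter (H_of L r s c v C))
        \<and> tail_filter (H_of L r s c v C) \<inter> Dv = C"
    using tail_filter_ultrafilter[OF H] tail_filter_trace[OF H] C_of_H_of[OF C]
    unfolding A_ring_def by simp
  thus ?thesis unfolding U_of_def A_ring_def
    using ultrafilter_in_ring_gen_eqI by (intro the_equality) blast+
qed

end

theorem mainTheorem5:
  fixes L :: "'a set" and r s :: "'a \<Rightarrow> 'a" and c :: "'a \<Rightarrow> 'a \<Rightarrow> 'a" and v :: 'a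
  assumes "LCSC L r s c" and "finitely_aligned L r s c" and "v \<in> objects L r"
  defines "DH \<equiv> {H. H \<subseteq> rset L r v \<and> directed L r s c H \<and> hereditary L r s c H}"
  shows "bij_betw (H_of L r s c v) (Lstar L r s c v) DH
    \<and> (\<forall>C\<in>Lstar L r s c v. C_of L r s c v (H_of L r s c v C) = C)
    \<and> (\<forall>H\<in>DH. C_of L r s c v H \<in> Lstar L r s c v \<and> H_of L r s c v (C_of L r s c v H) = H)
    \<and> (\<forall>C1\<in>Lstar L r s c v. \<forall>C2\<in>Lstar L r s c v.
          C1 \<subseteq> C2 \<longleftrightarrow> H_of L r s c v C1 \<subseteq> H_of L r s c v C2)
    \<and> (\<forall>C\<in>Lstar L r s c v. U_of L r s c v C =
          {A \<in> A_ring L r s c v. \<exists>a\<in>H_of L r s c v C. H_of L r s c v C \<inter> mset L r s c a \<subseteq> A})"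
proof -
  interpret lcsc_object L r s c v
    by unfold_locales (rule assms)+
  show ?thesis
    unfolding DH_def
    using H_of_bij C_of_H_of C_of_in_Lstar H_of_C_of H_of_mono_iff U_of_eq_tail_filter
    by (simp add: tail_filter_def tail_in_def A_ring_def)
qed

end
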